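(* Let $G=\{G_1,\dots,G_K\}$ be a partition of $[p]$ into nonempty groups, $m=\min_k|G_k|$, and let $\Gamma$ be a $p\times p$ diagonal matrix with $\Gamma_{aa}=\gamma_k$ for all $a\in G_k$, $k=1,\dots,K$. Then for every $B\in\mathcal{C}$, $$\langle\Gamma,B^*-B\rangle\ \ge\ -\frac{\max_k\gamma_k-\min_k\gamma_k}{m}\sum_{j\neq k}|B_{G_jG_k}|_1.$$
   Context: $B_{G_jG_k}=(B_{ab})_{a\in G_j,b\in G_k}$ and $|M|_1$ denotes the sum of the absolute values of the entries of $M$. $\langle M,N\rangle=\mathrm{tr}(M^tN)$. $B^*$ is the $p\times p$ matrix with $B^*_{ab}=1/|G_k|$ if $a,b\in G_k$, and $0$ otherwise. $\mathcal{C}$ is the set of symmetric positive semidefinite $p\times p$ matrices $B$ with $\sum_aB_{ab}=1$ for all $b$, $B_{ab}\ge0$ for all $a,b$, and $\mathrm{tr}(B)=K$. *)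

theory Defs
  imports Complex_Main
begin

text \<open>p x p real matrices are represented as functions nat => nat => real;
  only entries with indices in {..<p} are relevant.  Indices run over 0..p-1.\<close>

definition frob_inner :: "nat \<Rightarrow> (nat \<Rightarrow> nat \<Rightarrow> real) \<Rightarrow> (nat \<Rightarrow> nat \<Rightarrow> real) \<Rightarrow> real" where
  "frob_inner p M N = (\<Sum>a<p. \<Sum>b<p. M a b * N a b)"

definition psd_mat :: "nat \<Rightarrow> (nat \<Rightarrow> nat \<Rightarrow> real) \<Rightarrow> bool" where
  "psd_mat p B \<longleftrightarrow> (\<forall>a<p. \<forall>b<p. B a b = B b a) \<and>
     (\<forall>x :: nat \<Rightarrow> real. 0 \<le> (\<Sum>a<p. \<Sum>b<p. x a * B a b * x b))"

definition C_set :: "nat \<Rightarrow> nat \<Rightarrow> (nat \<Rightarrow> nat \<Rightarrow> real) set" where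
  "C_set p K = {B. psd_mat p B \<and>
     (\<forall>b<p. (\<Sum>a<p. B a b) = 1) \<and>
     (\<forall>a<p. \<forall>b<p. 0 \<le> B a b) \<and>
     (\<Sum>a<p. B a a) = real K}"

definition is_partition :: "nat \<Rightarrow> nat \<Rightarrow> (nat \<Rightarrow> nat set) \<Rightarrow> bool" where
  "is_partition p K G \<longleftrightarrow> (\<forall>k<K. G k \<noteq> {}) \<and>
     (\<forall>j<K. \<forall>k<K. j \<noteq> k \<longrightarrow> G j \<inter> G k = {}) \<and>
     (\<Union>k<K. G k) = {..<p}"

text \<open>B*: entry 1/|G_k| if a, b both lie in G_k, 0 otherwise (groups are disjoint).\<close>
definition Bstar :: "nat \<Rightarrow> (nat \<Rightarrow> nat set) \<Rightarrow> nat \<Rightarrow> nat \<Rightarrow> real" where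
  "Bstar K G a b = (\<Sum>k<K. if a \<in> G k \<and> b \<in> G k then 1 / real (card (G k)) else 0)"

definition block_l1 :: "(nat \<Rightarrow> nat \<Rightarrow> real) \<Rightarrow> nat set \<Rightarrow> nat set \<Rightarrow> real" where
  "block_l1 B S T = (\<Sum>a\<in>S. \<Sum>b\<in>T. \<bar>B a b\<bar>)"

end

theory Submission
  imports Defs
begin

text \<open>Write \<open>d\<^sub>k = 1 - tr B\<^sub>G\<^sub>k\<^sub>G\<^sub>k\<close>. Since \<open>\<Gamma>\<close> is diagonal and constant on each group,
  \<open>\<langle>\<Gamma>, B\<^sup>* - B\<rangle> = \<Sum>\<^sub>k \<gamma>\<^sub>k d\<^sub>k\<close>, and \<open>\<Sum>\<^sub>k d\<^sub>k = 0\<close> because \<open>tr B = K\<close>.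
  The row sums of \<open>B\<close> over \<open>G\<^sub>k\<close> add up to \<open>|G\<^sub>k|\<close>, split into the diagonal block and the
  off-diagonal blocks; positive semidefiniteness gives \<open>2 B\<^sub>a\<^sub>b \<le> B\<^sub>a\<^sub>a + B\<^sub>b\<^sub>b\<close>, so the diagonal block
  sums to at most \<open>|G\<^sub>k| tr B\<^sub>G\<^sub>k\<^sub>G\<^sub>k\<close>. Hence \<open>|G\<^sub>k| d\<^sub>k\<close> is bounded by the off-diagonal mass of the
  \<open>k\<close>-th block row. Finally \<open>\<Sum>\<^sub>k \<gamma>\<^sub>k d\<^sub>k = \<Sum>\<^sub>k (\<gamma>\<^sub>k - max \<gamma>) d\<^sub>k\<close>, and each term is at least
  \<open>-(max \<gamma> - min \<gamma>)\<close> times the upper bound for \<open>d\<^sub>k\<close>.\<close>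

lemma weighted_sum_ge_of_sum_eq_0:
  fixes \<gamma> d c :: "'a \<Rightarrow> real"
  assumes "(\<Sum>k\<in>I. d k) = 0"
    and "\<And>k. k \<in> I \<Longrightarrow> d k \<le> c k" "\<And>k. k \<in> I \<Longrightarrow> 0 \<le> c k"
    and "\<And>k. k \<in> I \<Longrightarrow> lo \<le> \<gamma> k" "\<And>k. k \<in> I \<Longrightarrow> \<gamma> k \<le> hi"
  shows "(\<Sum>k\<in>I. \<gamma> k * d k) \<ge> - (hi - lo) * (\<Sum>k\<in>I. c k)"
proof -
  have "- (hi - lo) * (\<Sum>k\<in>I. c k) = (\<Sum>k\<in>I. - (hi - lo) * c k)"
    by (simp add: sum_distrib_left)
  also have "\<dots> \<le> (\<Sum>k\<in>I. (\<gamma> k - hi) * d k)"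
  proof (rule sum_mono)
    fix k assume k: "k \<in> I"
    have "(hi - \<gamma> k) * d k \<le> (hi - lo) * c k"
    proof (cases "0 \<le> d k")
      case True
      then show ?thesis using assms(2-5)[OF k] by (intro mult_mono) auto
    next
      case False
      then show ?thesis using assms(2-5)[OF k]
        by (smt (verit) mult_nonneg_nonneg mult_nonneg_nonpos)
    qed
    then show "- (hi - lo) * c k \<le> (\<gamma> k - hi) * d k" by (simp add: algebra_simps)
  qed
  also have "\<dots> = (\<Sum>k\<in>I. \<gamma> k * d k)"
    using assms(1) by (simp add: algebra_simps sum_subtractf sum_distrib_left[symmetric])
  finally show ?thesis .
qed

lemma psd_mat_entry_le:
  assumes "psd_mat p B" "a < p" "b < p"
  shows "2 * B a b \<le> B a a + B b b"
proof (cases "a = b")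
  case False
  define x :: "nat \<Rightarrow> real" where "x = (\<lambda>i. if i = a then 1 else if i = b then -1 else 0)"
  have sym: "B a b = B b a" using assms unfolding psd_mat_def by auto
  have lin: "(\<Sum>i<p. x i * f i) = f a - f b" for f :: "nat \<Rightarrow> real"
  proof -
    have "(\<Sum>i<p. x i * f i) = (\<Sum>i\<in>{a,b}. x i * f i)"
      by (rule sum.mono_neutral_right) (auto simp: x_def assms)
    then show ?thesis using False by (simp add: x_def)
  qed
  have "(\<Sum>i<p. \<Sum>j<p. x i * B i j * x j) = (\<Sum>i<p. x i * (\<Sum>j<p. x j * B i j))"
    by (simp add: sum_distrib_left algebra_simps)
  also have "\<dots> = (\<Sum>i<p. x i * (B i a - B i b))"
    by (simp add: lin)
  also have "\<dots> = B a a + B b b - 2 * B a b"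
    using sym by (simp add: lin)
  finally have "(\<Sum>i<p. \<Sum>j<p. x i * B i j * x j) = B a a + B b b - 2 * B a b" .
  moreover have "0 \<le> (\<Sum>i<p. \<Sum>j<p. x i * B i j * x j)"
    using assms(1) unfolding psd_mat_def by blast
  ultimately show ?thesis by simp
qed simp

lemma psd_mat_block_sum_le:
  assumes "psd_mat p B" "S \<subseteq> {..<p}"
  shows "(\<Sum>a\<in>S. \<Sum>b\<in>S. B a b) \<le> real (card S) * (\<Sum>a\<in>S. B a a)"
proof -
  have "(\<Sum>a\<in>S. \<Sum>b\<in>S. B a b) \<le> (\<Sum>a\<in>S. \<Sum>b\<in>S. (B a a + B b b) / 2)"
  proof (intro sum_mono)
    fix a b assume "a \<in> S" "b \<in> S"
    then have "a < p" "b < p" using assms(2) by auto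
    then show "B a b \<le> (B a a + B b b) / 2"
      using psd_mat_entry_le[OF assms(1), of a b] by simp
  qed
  also have "\<dots> = real (card S) * (\<Sum>a\<in>S. B a a)"
    by (simp add: sum.distrib add_divide_distrib sum_divide_distrib[symmetric]
        sum_distrib_left[symmetric] sum.swap[of "\<lambda>a b. B b b"])
  finally show ?thesis .
qed

lemma C_set_row_sum:
  assumes "B \<in> C_set p K" "a < p"
  shows "(\<Sum>b<p. B a b) = 1"
proof -
  have "(\<Sum>b<p. B a b) = (\<Sum>b<p. B b a)"
    using assms unfolding C_set_def psd_mat_def by (intro sum.cong) auto
  then show ?thesis using assms unfolding C_set_def by simp
qed

lemma
  assumes "is_partition p K G" "k < K"
  shows partition_subset: "G k \<subseteq> {..<p}"
    and partition_finite: "finite (G k)"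
    and partition_card_pos: "card (G k) > 0"
proof -
  show sub: "G k \<subseteq> {..<p}" using assms unfolding is_partition_def by blast
  then show fin: "finite (G k)" by (rule finite_subset) simp
  show "card (G k) > 0" using fin assms unfolding is_partition_def by (simp add: card_gt_0_iff)
qed

lemma sum_over_partition:
  assumes "is_partition p K G"
  shows "(\<Sum>a<p. f a) = (\<Sum>k<K. \<Sum>a\<in>G k. f a)"
proof -
  have "(\<Sum>a<p. f a) = sum f (\<Union>k<K. G k)"
    using assms unfolding is_partition_def by simp
  also have "\<dots> = (\<Sum>k<K. sum f (G k))"
    using assms partition_finite by (intro sum.UNION_disjoint) (auto simp: is_partition_def)
  finally show ?thesis .
qed

lemma Bstar_diag:
  assumes "is_partition p K G" "k < K" "a \<in> G k"
  shows "Bstar K G a a = 1 / real (card (G k))"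
proof -
  have "Bstar K G a a = (\<Sum>k'\<in>{k}. if a \<in> G k' \<and> a \<in> G k' then 1 / real (card (G k')) else 0)"
    unfolding Bstar_def using assms
    by (intro sum.mono_neutral_right) (auto simp: is_partition_def)
  then show ?thesis using assms(3) by simp
qed

lemma frob_inner_diag_left:
  assumes "\<forall>a<p. \<forall>b<p. a \<noteq> b \<longrightarrow> \<Gamma> a b = 0"
  shows "frob_inner p \<Gamma> M = (\<Sum>a<p. \<Gamma> a a * M a a)"
  unfolding frob_inner_def
proof (rule sum.cong[OF refl])
  fix a assume "a \<in> {..<p}"
  then show "(\<Sum>b<p. \<Gamma> a b * M a b) = \<Gamma> a a * M a a"
    using assms by (intro sum.mono_neutral_right[where S="{a}", simplified]) auto
qed

lemma frob_inner_group_diag_Bstar: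
  assumes "is_partition p K G"
    and "\<forall>a<p. \<forall>b<p. a \<noteq> b \<longrightarrow> \<Gamma> a b = 0"
    and "\<forall>k<K. \<forall>a\<in>G k. \<Gamma> a a = \<gamma> k"
  shows "frob_inner p \<Gamma> (\<lambda>a b. Bstar K G a b - B a b) = (\<Sum>k<K. \<gamma> k * (1 - (\<Sum>a\<in>G k. B a a)))"
proof -
  have "frob_inner p \<Gamma> (\<lambda>a b. Bstar K G a b - B a b) = (\<Sum>k<K. \<Sum>a\<in>G k. \<Gamma> a a * (Bstar K G a a - B a a))"
    using frob_inner_diag_left[OF assms(2)] sum_over_partition[OF assms(1)] by simp
  also have "\<dots> = (\<Sum>k<K. \<Sum>a\<in>G k. \<gamma> k * (1 / real (card (G k)) - B a a))"
    using assms(3) Bstar_diag[OF assms(1)] by (intro sum.cong) auto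
  also have "\<dots> = (\<Sum>k<K. \<gamma> k * (1 - (\<Sum>a\<in>G k. B a a)))"
  proof (intro sum.cong refl)
    fix k assume "k \<in> {..<K}"
    then have "card (G k) \<noteq> 0" using partition_card_pos[OF assms(1)] by auto
    then show "(\<Sum>a\<in>G k. \<gamma> k * (1 / real (card (G k)) - B a a)) = \<gamma> k * (1 - (\<Sum>a\<in>G k. B a a))"
      by (simp add: sum_distrib_left[symmetric] sum_subtractf)
  qed
  finally show ?thesis .
qed

lemma C_set_group_traces_sum:
  assumes "is_partition p K G" "B \<in> C_set p K"
  shows "(\<Sum>k<K. 1 - (\<Sum>a\<in>G k. B a a)) = 0"
  using assms sum_over_partition[OF assms(1), of "\<lambda>a. B a a"]
  by (simp add: sum_subtractf C_set_def)

lemma C_set_block_row_mass: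
  assumes "is_partition p K G" "B \<in> C_set p K" "j < K"
  shows "real (card (G j)) = block_l1 B (G j) (G j)
           + (\<Sum>k<K. if j \<noteq> k then block_l1 B (G j) (G k) else 0)"
proof -
  have nonneg: "\<And>a b. a \<in> G j \<Longrightarrow> b < p \<Longrightarrow> \<bar>B a b\<bar> = B a b"
    using assms partition_subset[OF assms(1,3)] unfolding C_set_def by auto
  have "real (card (G j)) = (\<Sum>a\<in>G j. 1)" by simp
  also have "\<dots> = (\<Sum>a\<in>G j. \<Sum>b<p. \<bar>B a b\<bar>)"
    using C_set_row_sum[OF assms(2)] partition_subset[OF assms(1,3)] nonneg by (intro sum.cong) auto
  also have "\<dots> = (\<Sum>k<K. block_l1 B (G j) (G k))"
    unfolding block_l1_def sum_over_partition[OF assms(1)] by (rule sum.swap)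
  also have "\<dots> = (\<Sum>k<K. (if j = k then block_l1 B (G j) (G k) else 0)
                      + (if j \<noteq> k then block_l1 B (G j) (G k) else 0))"
    by (intro sum.cong) auto
  also have "\<dots> = block_l1 B (G j) (G j) + (\<Sum>k<K. if j \<noteq> k then block_l1 B (G j) (G k) else 0)"
    using assms(3) by (simp add: sum.distrib)
  finally show ?thesis .
qed

lemma C_set_group_trace_deficit_le:
  assumes "is_partition p K G" "B \<in> C_set p K" "j < K"
  shows "real (card (G j)) * (1 - (\<Sum>a\<in>G j. B a a))
           \<le> (\<Sum>k<K. if j \<noteq> k then block_l1 B (G j) (G k) else 0)"
proof -
  have "block_l1 B (G j) (G j) = (\<Sum>a\<in>G j. \<Sum>b\<in>G j. B a b)"
    using assms partition_subset[OF assms(1,3)] unfolding block_l1_def C_set_def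
    by (intro sum.cong refl) (auto intro!: abs_of_nonneg)
  also have "\<dots> \<le> real (card (G j)) * (\<Sum>a\<in>G j. B a a)"
    using assms(2) partition_subset[OF assms(1,3)]
    by (intro psd_mat_block_sum_le) (auto simp: C_set_def)
  finally show ?thesis
    using C_set_block_row_mass[OF assms] by (simp add: algebra_simps)
qed

theorem mainTheorem6:
  fixes p K :: nat and G :: "nat \<Rightarrow> nat set" and \<gamma> :: "nat \<Rightarrow> real"
    and \<Gamma> B :: "nat \<Rightarrow> nat \<Rightarrow> real"
  assumes part: "is_partition p K G"
    and Gamma_diag: "\<forall>a<p. \<forall>b<p. a \<noteq> b \<longrightarrow> \<Gamma> a b = 0"
    and Gamma_grp: "\<forall>k<K. \<forall>a\<in>G k. \<Gamma> a a = \<gamma> k"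
    and B: "B \<in> C_set p K"
  shows "frob_inner p \<Gamma> (\<lambda>a b. Bstar K G a b - B a b) \<ge>
     - ((Max (\<gamma> ` {..<K}) - Min (\<gamma> ` {..<K})) / real (Min ((\<lambda>k. card (G k)) ` {..<K})))
       * (\<Sum>j<K. \<Sum>k<K. if j \<noteq> k then block_l1 B (G j) (G k) else 0)"
proof -
  define m where "m = Min ((\<lambda>k. card (G k)) ` {..<K})"
  define off where "off j = (\<Sum>k<K. if j \<noteq> k then block_l1 B (G j) (G k) else 0)" for j
  have off_nonneg: "0 \<le> off j" for j
    unfolding off_def block_l1_def by (auto intro!: sum_nonneg)
  have deficit_le: "1 - (\<Sum>a\<in>G j. B a a) \<le> off j / real m" if j: "j < K" for j
  proof -
    have "0 < m"
      using j partition_card_pos[OF part] unfolding m_def by (subst Min_gr_iff) auto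
    moreover have "m \<le> card (G j)"
      using j unfolding m_def by (intro Min_le) auto
    ultimately have "off j / real (card (G j)) \<le> off j / real m"
      by (intro divide_left_mono off_nonneg) auto
    moreover have "1 - (\<Sum>a\<in>G j. B a a) \<le> off j / real (card (G j))"
      using C_set_group_trace_deficit_le[OF part B j] partition_card_pos[OF part j]
      by (simp add: off_def field_simps)
    ultimately show ?thesis by linarith
  qed
  have "- ((Max (\<gamma> ` {..<K}) - Min (\<gamma> ` {..<K})) / real m) * (\<Sum>j<K. off j)
          = - (Max (\<gamma> ` {..<K}) - Min (\<gamma> ` {..<K})) * (\<Sum>j<K. off j / real m)"
    by (simp add: sum_divide_distrib[symmetric] diff_divide_distrib algebra_simps)
  also have "\<dots> \<le> (\<Sum>k<K. \<gamma> k * (1 - (\<Sum>a\<in>G k. B a a)))"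
    using C_set_group_traces_sum[OF part B] deficit_le off_nonneg
    by (intro weighted_sum_ge_of_sum_eq_0) auto
  finally show ?thesis
    using frob_inner_group_diag_Bstar[OF part Gamma_diag Gamma_grp] by (simp add: m_def off_def)
qed

end
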